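(* Let $(a,b)\in P$ with $|a|>2$, and consider the affine curve $y^2+(x^2-1)(x^2+ax+b)=0$. Then $$N(a,b)\ge 2+\sqrt{\frac{|a|-2}{2(1+b-|a|)}}.$$
   Context: Let $P$ be the set of $(a,b)\in\mathbb{R}^2$ such that $h(x)=x^2+ax+b$ has no multiple root and $h(x)>0$ for all real $x$ with $|x|\ge1$ (equivalently: $a^2<4b$, or $a^2>4b$ and $|a|<\min\{2,b+1\}$). For $(a,b)\in P$ let $C_{a,b}$ be the affine curve $y^2+(x^2-1)(x^2+ax+b)=0$, $\mathbb{R}[C_{a,b}]=\mathbb{R}[x,y]/(y^2+(x^2-1)(x^2+ax+b))$. For $g=u(x)+v(x)y$ put $\delta(g)=\max\{\deg u,\deg v+2\}$, and for $0\ne g$ let $\theta(g)$ be the least integer $e\ge0$ with $g=\sum_i g_i^2$, $g_i\in\mathbb{R}[C_{a,b}]$, $\delta(g_i)\le e$. Define $N(a,b):=\theta(1-x^2)$ computed in $\mathbb{R}[C_{a,b}]$ (the stability constant of $C_{a,b}$). *)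

theory Defs
  imports "HOL-Analysis.Analysis" "HOL-Computational_Algebra.Polynomial"
begin

definition hpoly :: "real \<Rightarrow> real \<Rightarrow> real poly" where
  "hpoly a b = [:b, a, 1:]"

(* The parameter set P: h has no multiple root and h(x) > 0 for |x| >= 1.
   (A monic real quadratic with a multiple root has a real double root,
   so rsquarefree over the reals is the same as "no multiple root".) *)
definition P :: "(real \<times> real) set" where
  "P = {(a, b). rsquarefree (hpoly a b) \<and> (\<forall>x::real. \<bar>x\<bar> \<ge> 1 \<longrightarrow> poly (hpoly a b) x > 0)}"

(* Elements of R[C_{a,b}] = R[x,y]/(y^2 + (x^2-1) h(x)) are uniquely written
   u(x) + v(x) y; we represent them by the pair (u, v).
   Multiplication uses y^2 = -(x^2-1) h(x). *)
definition cmult :: "real \<Rightarrow> real \<Rightarrow> real poly \<times> real poly \<Rightarrow> real poly \<times> real poly \<Rightarrow> real poly \<times> real poly" where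
  "cmult a b g1 g2 =
     (fst g1 * fst g2 - snd g1 * snd g2 * [:-1, 0, 1:] * hpoly a b,
      fst g1 * snd g2 + snd g1 * fst g2)"

(* delta(u + v y) = max{deg u, deg v + 2}, with deg 0 = -infinity *)
definition cdelta :: "real poly \<times> real poly \<Rightarrow> nat" where
  "cdelta g = (if snd g = 0 then degree (fst g) else max (degree (fst g)) (degree (snd g) + 2))"

definition sos_le :: "real \<Rightarrow> real \<Rightarrow> real poly \<times> real poly \<Rightarrow> nat \<Rightarrow> bool" where
  "sos_le a b g e \<longleftrightarrow> (\<exists>gs :: (real poly \<times> real poly) list.
      (\<forall>gi \<in> set gs. cdelta gi \<le> e) \<and>
      fst g = sum_list (map (\<lambda>gi. fst (cmult a b gi gi)) gs) \<and>
      snd g = sum_list (map (\<lambda>gi. snd (cmult a b gi gi)) gs))"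

(* theta(g): least e with such a representation (infinity if none exists) *)
definition theta :: "real \<Rightarrow> real \<Rightarrow> real poly \<times> real poly \<Rightarrow> enat" where
  "theta a b g = (INF e \<in> {e. sos_le a b g e}. enat e)"

definition N :: "real \<Rightarrow> real \<Rightarrow> enat" where
  "N a b = theta a b ([:1, 0, -1:], 0)"

end

theory Submission
  imports Defs
begin

(* Suppose 1 - x^2 = sum_i (u_i + v_i y)^2 in R[C_{a,b}] with delta(u_i + v_i y) <= e.
   Comparing the y-free parts, 1 - x^2 = sum u_i^2 - (x^2-1) h sum v_i^2; hence every u_i
   vanishes at +-1, u_i = (x^2-1) w_i, and dividing by 1 - x^2 gives a certificate
       h V - (x^2-1) W = 1,   V = sum v_i^2 with deg v_i <= e - 2,   W = sum w_i^2 >= 0.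
   For a > 2 the minimum of h on [-1,1] is H = h(-1) = 1 - a + b, so V <= 1/H on [-1,1]
   and V(-1) = 1/H, while differentiating the certificate at -1 forces -H V'(-1) >= (a-2)/H.
   On the other hand, Markov's inequality |q'(-1)| <= d^2 max_[-1,1] |q| (proved below via
   Lagrange interpolation at the Chebyshev nodes) together with Cauchy-Schwarz bounds
   V'(-1)^2 <= 4 d^4 V(-1) max_[-1,1] V for sums of squares of degree-d polynomials.
   Combining gives (a-2)/(2H) <= (e-2)^2; the case a < -2 follows by the substitution
   x -> -x. *)


fun cheb :: "nat \<Rightarrow> real poly" where
  "cheb 0 = 1"
| "cheb (Suc 0) = [:0,1:]"
| "cheb (Suc (Suc n)) = smult 2 [:0,1:] * cheb (Suc n) - cheb n"

lemma degree_cheb: "degree (cheb n) \<le> n"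
proof (induction n rule: cheb.induct)
  case (3 n)
  have "degree (smult 2 [:0,1:] * cheb (Suc n)) \<le> Suc (Suc n)"
    using degree_mult_le[of "smult 2 [:0,1::real:]" "cheb (Suc n)"] 3 by simp
  moreover have "degree (cheb n) \<le> Suc (Suc n)" using 3 by simp
  ultimately show ?case by (simp add: degree_diff_le)
qed auto

lemma poly_cheb_cos: "poly (cheb n) (cos t) = cos (real n * t)"
proof (induction n rule: cheb.induct)
  case (3 n)
  define A where "A = real (Suc n) * t"
  have "poly (cheb (Suc (Suc n))) (cos t) = 2 * cos t * cos A - cos (A - t)"
    using 3 by (simp add: A_def algebra_simps)
  also have "\<dots> = cos (A + t)" by (simp add: cos_add cos_diff)
  finally show ?case by (simp add: A_def algebra_simps)
qed auto

lemma poly_cheb_one: "poly (cheb n) 1 = 1"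
  using poly_cheb_cos[of n 0] by simp

(* T_n'(1) = n^2: the extremal value in Markov's inequality. *)
lemma poly_pderiv_cheb_one: "poly (pderiv (cheb n)) 1 = real n ^ 2"
proof (induction n rule: cheb.induct)
  case (3 n)
  then show ?case
    by (simp add: pderiv_mult pderiv_diff pderiv_smult poly_cheb_one algebra_simps
        power2_eq_square pderiv_pCons)
qed (auto simp: pderiv_pCons)

lemma pderiv_sum: "pderiv (sum f A) = (\<Sum>x\<in>A. pderiv (f x))"
  using higher_pderiv_sum[of 1 f A] by simp


(* The Chebyshev nodes cos(k pi/d), k = 0..d (the extremal points of T_d, where
   T_d = (-1)^k), and the Lagrange basis polynomials for them. *)
definition node :: "nat \<Rightarrow> nat \<Rightarrow> real" where
  "node d k = cos (real k * pi / real d)"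

definition lag_denom :: "nat \<Rightarrow> nat \<Rightarrow> real" where
  "lag_denom d k = (\<Prod>j\<in>{..d}-{k}. node d k - node d j)"

definition lag :: "nat \<Rightarrow> nat \<Rightarrow> real poly" where
  "lag d k = smult (1 / lag_denom d k) (\<Prod>j\<in>{..d}-{k}. [:- node d j, 1:])"

lemma node_strict_antimono:
  assumes "d \<ge> 1" "j < k" "k \<le> d"
  shows "node d k < node d j"
proof -
  have "real j * pi / real d < real k * pi / real d"
    using assms by (simp add: divide_strict_right_mono)
  moreover have "real k * pi / real d \<le> pi"
    using assms by (simp add: field_simps)
  ultimately show ?thesis unfolding node_def by (intro cos_monotone_0_pi) auto
qed

lemma node_inj:
  assumes "d \<ge> 1" "j \<le> d" "k \<le> d" "node d j = node d k"
  shows "j = k"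
  using node_strict_antimono[OF assms(1), of j k] node_strict_antimono[OF assms(1), of k j] assms
  by (metis less_irrefl linorder_neqE_nat)

lemma node_in_interval: "-1 \<le> node d k" "node d k \<le> 1"
  by (simp_all add: node_def)

lemma poly_cheb_node: assumes "d \<ge> 1" shows "poly (cheb d) (node d k) = (-1) ^ k"
proof -
  have "real d * (real k * pi / real d) = real k * pi" using assms by simp
  then show ?thesis unfolding node_def poly_cheb_cos by (simp add: cos_npi)
qed

(* The nodes decrease in k, so exactly k factors of the denominator are negative. *)
lemma lag_denom_sign:
  assumes "d \<ge> 1" "k \<le> d"
  shows "0 < (-1) ^ k * lag_denom d k"
proof -
  have split: "{..d}-{k} = {..<k} \<union> {k<..d}" using assms by auto
  have "lag_denom d k = (\<Prod>j\<in>{..<k}. node d k - node d j) * (\<Prod>j\<in>{k<..d}. node d k - node d j)"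
    unfolding lag_denom_def split by (rule prod.union_disjoint) auto
  also have "(\<Prod>j\<in>{..<k}. node d k - node d j) = (-1)^k * (\<Prod>j\<in>{..<k}. node d j - node d k)"
    using prod_uminus[of "\<lambda>j. node d j - node d k" "{..<k}"] by simp
  finally have "(-1) ^ k * lag_denom d k =
      (\<Prod>j\<in>{..<k}. node d j - node d k) * (\<Prod>j\<in>{k<..d}. node d k - node d j)"
    by (simp add: power_mult_distrib[symmetric] mult.assoc[symmetric])
  moreover have "0 < (\<Prod>j\<in>{..<k}. node d j - node d k)"
    by (rule prod_pos) (use node_strict_antimono assms in auto)
  moreover have "0 < (\<Prod>j\<in>{k<..d}. node d k - node d j)"
    by (rule prod_pos) (use node_strict_antimono assms in auto)
  ultimately show ?thesis by simp
qed

lemma lag_denom_nonzero: "d \<ge> 1 \<Longrightarrow> k \<le> d \<Longrightarrow> lag_denom d k \<noteq> 0"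
  using lag_denom_sign by fastforce

lemma poly_lag_node:
  assumes "d \<ge> 1" "j \<le> d" "k \<le> d"
  shows "poly (lag d k) (node d j) = (if j = k then 1 else 0)"
proof (cases "j = k")
  case True
  then show ?thesis using lag_denom_nonzero[OF assms(1,3)]
    by (simp add: lag_def poly_prod lag_denom_def)
next
  case False
  have "(\<Prod>i\<in>{..d}-{k}. node d j - node d i) = 0"
    by (rule prod_zero) (use False assms in auto)
  then show ?thesis using False by (simp add: lag_def poly_prod)
qed

lemma degree_lag: assumes "k \<le> d" shows "degree (lag d k) \<le> d"
proof -
  have "degree (\<Prod>j\<in>{..d}-{k}. [:- node d j, 1::real:])
          \<le> (\<Sum>j\<in>{..d}-{k}. degree [:- node d j, 1::real:])"
    using degree_prod_sum_le[of "{..d}-{k}" "\<lambda>j. [:- node d j, 1::real:]"] by (simp add: o_def)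
  also have "\<dots> \<le> d" by (use assms in \<open>simp add: card_Diff_singleton\<close>)
  finally show ?thesis by (simp add: lag_def)
qed

lemma lagrange_interpolation:
  assumes "d \<ge> 1" "degree q \<le> d"
  shows "q = (\<Sum>k\<le>d. smult (poly q (node d k)) (lag d k))"
proof (rule ccontr)
  define r where "r = q - (\<Sum>k\<le>d. smult (poly q (node d k)) (lag d k))"
  assume "q \<noteq> (\<Sum>k\<le>d. smult (poly q (node d k)) (lag d k))"
  then have "r \<noteq> 0" by (simp add: r_def)
  have "degree r \<le> d" unfolding r_def
    by (intro degree_diff_le assms degree_sum_le)
      (auto intro: order.trans[OF degree_smult_le] degree_lag)
  have roots: "node d j \<in> {x. poly r x = 0}" if "j \<le> d" for j
  proof -
    have "(\<Sum>k\<le>d. poly q (node d k) * poly (lag d k) (node d j))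
            = (\<Sum>k\<le>d. if k = j then poly q (node d j) else 0)"
      by (rule sum.cong) (use poly_lag_node assms that in auto)
    also have "\<dots> = poly q (node d j)" using that by simp
    finally show ?thesis by (simp add: r_def poly_sum)
  qed
  have "card (node d ` {..d}) \<le> card {x. poly r x = 0}"
    by (rule card_mono) (use poly_roots_finite[OF \<open>r \<noteq> 0\<close>] roots in auto)
  also have "\<dots> \<le> degree r" by (rule card_poly_roots_bound[OF \<open>r \<noteq> 0\<close>])
  finally have "card (node d ` {..d}) \<le> d" using \<open>degree r \<le> d\<close> by simp
  moreover have "card (node d ` {..d}) = Suc d"
    by (subst card_image) (auto intro!: inj_onI node_inj[OF assms(1)])
  ultimately show False by simp
qed

definition lag_weight :: "nat \<Rightarrow> nat \<Rightarrow> real" where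
  "lag_weight d k = poly (pderiv (lag d k)) 1"

lemma pderiv_one_interpolation:
  assumes "d \<ge> 1" "degree q \<le> d"
  shows "poly (pderiv q) 1 = (\<Sum>k\<le>d. poly q (node d k) * lag_weight d k)"
proof -
  have "poly (pderiv q) 1 = poly (pderiv (\<Sum>k\<le>d. smult (poly q (node d k)) (lag d k))) 1"
    using lagrange_interpolation[OF assms] by simp
  then show ?thesis by (simp add: pderiv_sum pderiv_smult poly_sum lag_weight_def)
qed

(* The weights alternate in sign like the values of T_d at the nodes: the product in
   lag_k has all roots <= 1, so its derivative at 1 is >= 0. *)
lemma lag_weight_sign:
  assumes "d \<ge> 1" "k \<le> d"
  shows "0 \<le> (-1) ^ k * lag_weight d k"
proof -
  have numer: "0 \<le> poly (pderiv (\<Prod>j\<in>{..d}-{k}. [:- node d j, 1::real:])) 1"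
    unfolding pderiv_prod
    by (auto simp: poly_sum poly_prod pderiv_pCons node_in_interval
        intro!: sum_nonneg prod_nonneg)
  have "(-1) ^ k * lag_weight d k =
      ((-1) ^ k * lag_denom d k) * poly (pderiv (\<Prod>j\<in>{..d}-{k}. [:- node d j, 1::real:])) 1
        / (lag_denom d k)^2"
    using lag_denom_nonzero[OF assms]
    by (simp add: lag_weight_def lag_def pderiv_smult power2_eq_square field_simps)
  also have "\<dots> \<ge> 0" using lag_denom_sign[OF assms] numer by simp
  finally show ?thesis .
qed

(* Applying the differentiation rule to T_d shows that the weights have total mass d^2. *)
lemma sum_abs_lag_weight:
  assumes "d \<ge> 1"
  shows "(\<Sum>k\<le>d. \<bar>lag_weight d k\<bar>) = real d ^ 2"
proof -
  have "real d ^ 2 = (\<Sum>k\<le>d. (-1)^k * lag_weight d k)"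
    using pderiv_one_interpolation[OF assms degree_cheb]
    by (simp add: poly_pderiv_cheb_one poly_cheb_node[OF assms])
  also have "\<dots> = (\<Sum>k\<le>d. \<bar>lag_weight d k\<bar>)"
  proof (rule sum.cong)
    fix k assume "k \<in> {..d}"
    then have "0 \<le> (-1)^k * lag_weight d k" using lag_weight_sign[OF assms] by simp
    then show "(-1)^k * lag_weight d k = \<bar>lag_weight d k\<bar>"
      using abs_of_nonneg by (fastforce simp: abs_mult)
  qed simp
  finally show ?thesis by simp
qed

lemma markov_at_one:
  assumes "degree q \<le> d" and bound: "\<And>x. -1 \<le> x \<Longrightarrow> x \<le> 1 \<Longrightarrow> \<bar>poly q x\<bar> \<le> B"
  shows "\<bar>poly (pderiv q) 1\<bar> \<le> real d ^ 2 * B"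
proof (cases "d = 0")
  case True
  then have "pderiv q = 0" using assms(1) by (simp add: pderiv_eq_0_iff)
  then show ?thesis using True by simp
next
  case False
  then have "d \<ge> 1" by simp
  have "\<bar>poly (pderiv q) 1\<bar> = \<bar>\<Sum>k\<le>d. poly q (node d k) * lag_weight d k\<bar>"
    using pderiv_one_interpolation[OF \<open>d \<ge> 1\<close> assms(1)] by simp
  also have "\<dots> \<le> (\<Sum>k\<le>d. \<bar>poly q (node d k) * lag_weight d k\<bar>)" by (rule sum_abs)
  also have "\<dots> \<le> (\<Sum>k\<le>d. B * \<bar>lag_weight d k\<bar>)"
    by (rule sum_mono)
      (auto simp: abs_mult intro!: mult_right_mono bound node_in_interval)
  also have "\<dots> = real d ^ 2 * B"
    by (simp add: sum_abs_lag_weight[OF \<open>d \<ge> 1\<close>] sum_distrib_left[symmetric] mult.commute)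
  finally show ?thesis .
qed

lemma markov_at_minus_one:
  assumes "degree q \<le> d" and bound: "\<And>x. -1 \<le> x \<Longrightarrow> x \<le> 1 \<Longrightarrow> \<bar>poly q x\<bar> \<le> B"
  shows "\<bar>poly (pderiv q) (-1)\<bar> \<le> real d ^ 2 * B"
proof -
  define q' where "q' = pcompose q [:0,-1:]"
  have "degree q' \<le> d" using assms(1) by (simp add: q'_def degree_pcompose)
  moreover have "\<bar>poly q' x\<bar> \<le> B" if "-1 \<le> x" "x \<le> 1" for x
    using bound[of "-x"] that by (simp add: q'_def poly_pcompose)
  ultimately have "\<bar>poly (pderiv q') 1\<bar> \<le> real d ^ 2 * B" by (rule markov_at_one)
  then show ?thesis by (simp add: q'_def pderiv_pcompose poly_pcompose pderiv_pCons)
qed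

(* With p = sum v_i'(-1) v_i and
   S = sum v_i'(-1)^2 one has V'(-1) = 2 p(-1), p^2 <= S V (Cauchy-Schwarz) and
   S = p'(-1) <= d^2 sqrt(S M) (Markov). *)
lemma sum_squares_pderiv_minus_one:
  fixes vs :: "nat \<Rightarrow> real poly"
  assumes deg: "\<And>i. i < n \<Longrightarrow> degree (vs i) \<le> d"
    and bounded: "\<And>x. -1 \<le> x \<Longrightarrow> x \<le> 1 \<Longrightarrow> poly (\<Sum>i<n. vs i * vs i) x \<le> M"
  shows "(poly (pderiv (\<Sum>i<n. vs i * vs i)) (-1))^2
           \<le> 4 * real d ^ 4 * M * poly (\<Sum>i<n. vs i * vs i) (-1)"
proof -
  define V where "V = (\<Sum>i<n. vs i * vs i)"
  define c where "c i = poly (pderiv (vs i)) (-1)" for i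
  define p where "p = (\<Sum>i<n. smult (c i) (vs i))"
  define S where "S = (\<Sum>i<n. (c i)^2)"
  have polyV: "poly V x = (\<Sum>i<n. (poly (vs i) x)^2)" for x
    by (simp add: V_def poly_sum power2_eq_square)
  have "S \<ge> 0" unfolding S_def by (rule sum_nonneg) auto
  have "M \<ge> 0" using bounded[of 0] polyV[of 0] sum_nonneg[of "{..<n}" "\<lambda>i. (poly (vs i) 0)^2"]
    by (simp add: V_def)
  have polyp: "poly p x = (\<Sum>i<n. c i * poly (vs i) x)" for x by (simp add: p_def poly_sum)
  have cauchy_schwarz: "(poly p x)^2 \<le> S * poly V x" for x
    unfolding polyp polyV S_def by (rule Cauchy_Schwarz_ineq_sum)
  have dV: "poly (pderiv V) (-1) = 2 * poly p (-1)"
    by (simp add: V_def pderiv_sum pderiv_mult poly_sum polyp c_def sum_distrib_left algebra_simps)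
  have dp: "poly (pderiv p) (-1) = S"
    by (simp add: p_def pderiv_sum pderiv_smult poly_sum S_def c_def power2_eq_square)
  have degp: "degree p \<le> d" unfolding p_def
    by (rule degree_sum_le) (auto intro: order.trans[OF degree_smult_le] deg)
  have p_bound: "\<bar>poly p x\<bar> \<le> sqrt (S * M)" if "-1 \<le> x" "x \<le> 1" for x
  proof -
    have "(poly p x)^2 \<le> S * M"
      using cauchy_schwarz[of x] mult_left_mono[OF bounded[OF that] \<open>S \<ge> 0\<close>] by (simp add: V_def)
    then show ?thesis using real_sqrt_le_mono by fastforce
  qed
  have S_bound: "S \<le> real d ^ 4 * M"
  proof -
    have "S \<le> real d ^ 2 * sqrt (S * M)" using markov_at_minus_one[OF degp p_bound] dp by simp
    then have "S^2 \<le> (real d ^ 2)^2 * (S * M)"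
      using \<open>S \<ge> 0\<close> \<open>M \<ge> 0\<close> by (metis power_mono power_mult_distrib real_sqrt_pow2 zero_le_mult_iff)
    moreover have "(real d ^ 2)^2 = real d ^ 4" by (simp flip: power_mult)
    ultimately have "S * S \<le> S * (real d ^ 4 * M)" by (simp add: power2_eq_square mult_ac)
    then show ?thesis using \<open>S \<ge> 0\<close> \<open>M \<ge> 0\<close>
      by (cases "S = 0") (simp_all add: mult_le_cancel_left_pos)
  qed
  have "(poly (pderiv V) (-1))^2 = 4 * (poly p (-1))^2" by (simp add: dV power_mult_distrib)
  also have "\<dots> \<le> 4 * (S * poly V (-1))" using cauchy_schwarz[of "-1"] by simp
  also have "\<dots> \<le> 4 * (real d ^ 4 * M * poly V (-1))"
    using S_bound polyV[of "-1"] sum_nonneg[of "{..<n}" "\<lambda>i. (poly (vs i) (-1))^2"]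
    by (intro mult_left_mono mult_right_mono) auto
  finally show ?thesis by (simp add: V_def)
qed


(* A certificate of level d for (a,b): h V - (x^2-1) W = 1 with V a sum of squares of
   polynomials of degree <= d and W >= 0.  A representation of 1 - x^2 as a sum of squares
   in R[C_{a,b}] of level e yields a certificate of level e - 2. *)
definition certificate :: "real \<Rightarrow> real \<Rightarrow> nat \<Rightarrow> nat \<Rightarrow> (nat \<Rightarrow> real poly) \<Rightarrow> real poly \<Rightarrow> bool"
  where "certificate a b d n vs W \<longleftrightarrow>
    (\<forall>i<n. degree (vs i) \<le> d) \<and> (\<forall>x. 0 \<le> poly W x) \<and>
    hpoly a b * (\<Sum>i<n. vs i * vs i) - [:-1, 0, 1:] * W = 1"

lemma vanishing_at_pm_one_dvd:
  fixes u :: "real poly"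
  assumes "poly u 1 = 0" "poly u (-1) = 0"
  shows "\<exists>w. u = [:-1, 0, 1:] * w"
proof -
  obtain q where q: "u = [:-1, 1:] * q"
    using assms(1) poly_eq_0_iff_dvd[of u 1] by (auto elim: dvdE)
  then have "poly q (-1) = 0" using assms(2) by simp
  then obtain w where "q = [:1, 1:] * w" using poly_eq_0_iff_dvd[of q "-1"] by (auto elim: dvdE)
  then have "u = [:-1, 0, 1:] * w" by (simp add: q mult.assoc[symmetric])
  then show ?thesis by blast
qed

(* The y-free part of the sum of squares: 1 - x^2 = sum u_i^2 - (x^2-1) h sum v_i^2.
   Both sides vanish at +-1, so every u_i does; writing u_i = (x^2-1) w_i and cancelling
   the factor x^2 - 1 leaves a certificate with W = sum w_i^2.  If all v_i were 0 the
   identity would read -(x^2-1) W = 1, impossible at x = 1; hence e >= 2. *)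
lemma sos_imp_certificate:
  assumes "sos_le a b ([:1, 0, -1:], 0) e"
  shows "2 \<le> e \<and> (\<exists>n vs W. certificate a b (e - 2) n vs W)"
proof -
  define Q :: "real poly" where "Q = [:-1, 0, 1:]"
  obtain gs where delta: "\<forall>g \<in> set gs. cdelta g \<le> e"
    and fst_eq: "[:1, 0, -1:] = sum_list (map (\<lambda>g. fst (cmult a b g g)) gs)"
    using assms unfolding sos_le_def by auto
  define n where "n = length gs"
  define u where "u i = fst (gs ! i)" for i
  define v where "v i = snd (gs ! i)" for i
  have sum_eq: "[:1, 0, -1:] = (\<Sum>i<n. u i * u i - v i * v i * Q * hpoly a b)"
    using fst_eq by (simp add: sum_list_sum_nth n_def atLeast0LessThan cmult_def u_def v_def Q_def)
  have u_vanishes: "poly (u i) x = 0" if "i < n" "x = 1 \<or> x = -1" for i x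
  proof -
    have "poly Q x = 0" "poly [:1, 0, -1:] x = 0" using that(2) by (auto simp: Q_def)
    then have "(\<Sum>i<n. (poly (u i) x)^2) = 0"
      using arg_cong[OF sum_eq, of "\<lambda>p. poly p x"] by (simp add: poly_sum power2_eq_square)
    then show ?thesis using that(1) by (subst (asm) sum_nonneg_eq_0_iff) auto
  qed
  have "\<exists>w. u i = Q * w" if "i < n" for i
    using vanishing_at_pm_one_dvd u_vanishes[OF that] unfolding Q_def by blast
  then obtain w where w: "\<And>i. i < n \<Longrightarrow> u i = Q * w i" by metis
  define V where "V = (\<Sum>i<n. v i * v i)"
  define W where "W = (\<Sum>i<n. w i * w i)"
  have "(\<Sum>i<n. u i * u i - v i * v i * Q * hpoly a b)
          = (\<Sum>i<n. Q * (Q * (w i * w i)) - Q * (hpoly a b * (v i * v i)))"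
    by (rule sum.cong) (auto simp: w algebra_simps)
  also have "\<dots> = Q * (Q * W - hpoly a b * V)"
    by (simp add: W_def V_def sum_distrib_left sum_subtractf right_diff_distrib)
  finally have "Q * (Q * W - hpoly a b * V) = - Q" using sum_eq by (simp add: Q_def)
  then have "Q * (Q * W - hpoly a b * V + 1) = 0" by (simp add: algebra_simps)
  moreover have "Q \<noteq> 0" by (simp add: Q_def)
  ultimately have "Q * W - hpoly a b * V + 1 = 0" by simp
  then have identity: "hpoly a b * V - Q * W = 1" by (simp add: algebra_simps)
  have W_nonneg: "0 \<le> poly W x" for x by (simp add: W_def poly_sum sum_nonneg)
  have delta_i: "cdelta (gs ! i) \<le> e" if "i < n" for i using delta that by (simp add: n_def)
  have "2 \<le> e"
  proof (rule ccontr)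
    assume "\<not> 2 \<le> e"
    then have "v i = 0" if "i < n" for i
      using delta_i[OF that] by (auto simp: cdelta_def v_def split: if_splits)
    then have "poly (- Q * W) 1 = 1" using identity by (simp add: V_def)
    then show False by (simp add: Q_def)
  qed
  moreover have "degree (v i) \<le> e - 2" if "i < n" for i
    using delta_i[OF that] by (auto simp: cdelta_def v_def split: if_splits)
  ultimately show ?thesis
    using identity W_nonneg unfolding certificate_def V_def Q_def by blast
qed

lemma certificate_reflect:
  assumes "certificate a b d n vs W"
  shows "certificate (-a) b d n (\<lambda>i. pcompose (vs i) [:0, -1:]) (pcompose W [:0, -1:])"
proof -
  define R :: "real poly" where "R = [:0, -1:]"
  have h_R: "pcompose (hpoly a b) R = hpoly (-a) b" and Q_R: "pcompose [:-1, 0, 1:] R = [:-1, 0, 1:]"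
    by (simp_all add: hpoly_def R_def pcompose_pCons)
  have "hpoly (-a) b * (\<Sum>i<n. pcompose (vs i) R * pcompose (vs i) R) - [:-1, 0, 1:] * pcompose W R
          = pcompose (hpoly a b * (\<Sum>i<n. vs i * vs i) - [:-1, 0, 1:] * W) R"
    unfolding pcompose_diff pcompose_mult pcompose_sum h_R Q_R ..
  also have "\<dots> = 1" using assms by (simp add: certificate_def pcompose_1)
  finally have "hpoly (-a) b * (\<Sum>i<n. pcompose (vs i) R * pcompose (vs i) R)
                  - [:-1, 0, 1:] * pcompose W R = 1" .
  then show ?thesis
    using assms by (simp add: certificate_def R_def degree_pcompose poly_pcompose)
qed

(* For a >= 2, h >= h(-1) = 1 - a + b on [-1,1], and there (x^2-1) W <= 0; so the
   certificate forces V <= 1/h(-1) on [-1,1], with equality at -1. *)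
lemma certificate_values:
  assumes "certificate a b d n vs W" "a \<ge> 2" "1 - a + b > 0"
  defines "V \<equiv> \<Sum>i<n. vs i * vs i"
  shows "poly V (-1) = 1 / (1 - a + b)"
    and "\<And>x. -1 \<le> x \<Longrightarrow> x \<le> 1 \<Longrightarrow> poly V x \<le> 1 / (1 - a + b)"
proof -
  have identity: "(b + a * x + x^2) * poly V x - (x^2 - 1) * poly W x = 1" for x
  proof -
    have "poly (hpoly a b * V - [:-1, 0, 1:] * W) x = 1"
      using assms(1) by (simp add: certificate_def V_def)
    then show ?thesis by (simp add: hpoly_def algebra_simps power2_eq_square)
  qed
  show "poly V (-1) = 1 / (1 - a + b)"
    using identity[of "-1"] assms(3) by (simp add: field_simps)
  fix x :: real assume x: "-1 \<le> x" "x \<le> 1"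
  have "b + a * x + x^2 - (1 - a + b) = (x + 1) * (x - 1 + a)" by (simp add: algebra_simps power2_eq_square)
  moreover have "(x + 1) * (x - 1 + a) \<ge> 0" using x assms(2) by simp
  ultimately have h_min: "1 - a + b \<le> b + a * x + x^2" by linarith
  have "x^2 \<le> 1" using x by (simp add: abs_square_le_1)
  then have "(x^2 - 1) * poly W x \<le> 0"
    using assms(1) by (simp add: certificate_def mult_nonpos_nonneg)
  then have "(b + a * x + x^2) * poly V x \<le> 1" using identity[of x] by linarith
  moreover have "0 \<le> poly V x" by (simp add: V_def poly_sum sum_nonneg)
  ultimately have "(1 - a + b) * poly V x \<le> 1" using h_min by (meson mult_right_mono order_trans)
  then show "poly V x \<le> 1 / (1 - a + b)" using assms(3) by (simp add: field_simps)
qed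

lemma certificate_pderiv:
  assumes "certificate a b d n vs W"
  defines "V \<equiv> \<Sum>i<n. vs i * vs i"
  shows "(a - 2) * poly V (-1) + (1 - a + b) * poly (pderiv V) (-1) + 2 * poly W (-1) = 0"
proof -
  have "pderiv ([:b, a, 1:] * V - [:-1, 0, 1:] * W) = 0"
    using assms by (simp add: certificate_def hpoly_def)
  then have "poly (pderiv ([:b, a, 1:] * V - [:-1, 0, 1:] * W)) (-1) = 0" by simp
  then have "poly (pderiv [:b, a, 1:] * V + [:b, a, 1:] * pderiv V
               - (pderiv [:-1, 0, 1:] * W + [:-1, 0, 1:] * pderiv W)) (-1) = 0"
    by (simp only: pderiv_mult pderiv_diff mult.commute add.commute)
  then show ?thesis by (simp add: pderiv_pCons algebra_simps)
qed

(* The heart of the argument (case a > 2): from V(-1) = 1/H, V <= 1/H on [-1,1] and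
   -H V'(-1) = (a-2)/H + 2 W(-1) >= (a-2)/H, the Markov-type bound gives
   ((a-2)/H)^2 <= H^2 V'(-1)^2 <= 4 d^4. *)
lemma certificate_level_bound:
  assumes cert: "certificate a b d n vs W" and "a > 2" and "1 - a + b > 0"
  shows "(a - 2) / (2 * (1 - a + b)) \<le> real d ^ 2"
proof -
  define H where "H = 1 - a + b"
  define V where "V = (\<Sum>i<n. vs i * vs i)"
  have "H > 0" using \<open>1 - a + b > 0\<close> by (simp add: H_def)
  have V_at: "poly V (-1) = 1 / H" and V_le: "\<And>x. -1 \<le> x \<Longrightarrow> x \<le> 1 \<Longrightarrow> poly V x \<le> 1 / H"
    using certificate_values[OF cert] \<open>a > 2\<close> \<open>1 - a + b > 0\<close> by (simp_all add: H_def V_def)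
  have "(poly (pderiv V) (-1))^2 \<le> 4 * real d ^ 4 * (1 / H) * poly V (-1)"
    unfolding V_def by (rule sum_squares_pderiv_minus_one)
      (use cert V_le in \<open>auto simp: certificate_def V_def\<close>)
  then have "H^2 * (poly (pderiv V) (-1))^2 \<le> H^2 * (4 * real d ^ 4 * (1 / H) * (1 / H))"
    unfolding V_at by (rule mult_left_mono) simp
  also have "\<dots> = 4 * real d ^ 4" using \<open>H > 0\<close> by (simp add: power2_eq_square)
  also have "\<dots> = (2 * real d ^ 2)^2" by (simp add: power_mult_distrib flip: power_mult)
  finally have deriv_sq: "(- (H * poly (pderiv V) (-1)))^2 \<le> (2 * real d ^ 2)^2"
    by (simp add: power_mult_distrib)
  have "(a - 2) * poly V (-1) + H * poly (pderiv V) (-1) + 2 * poly W (-1) = 0"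
    using certificate_pderiv[OF cert] by (simp add: H_def V_def)
  moreover have "0 \<le> poly W (-1)" using cert by (simp add: certificate_def)
  moreover have "(a - 2) * poly V (-1) = (a - 2) / H" by (simp add: V_at)
  ultimately have "(a - 2) / H \<le> - (H * poly (pderiv V) (-1))" by linarith
  also have "\<dots> \<le> 2 * real d ^ 2"
    using deriv_sq by (rule power2_le_imp_le) simp
  finally have "(a - 2) / H / 2 \<le> real d ^ 2" by simp
  then show ?thesis by (simp add: H_def mult.commute)
qed

(* Both signs of a, via certificate_reflect; here 1 + b - |a| = h(-sgn a) > 0. *)
lemma certificate_level_bound_abs:
  assumes cert: "certificate a b d n vs W" and "\<bar>a\<bar> > 2"
    and "1 - a + b > 0" "1 + a + b > 0"
  shows "(\<bar>a\<bar> - 2) / (2 * (1 + b - \<bar>a\<bar>)) \<le> real d ^ 2"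
proof (cases "a > 2")
  case True
  then show ?thesis using certificate_level_bound[OF cert] assms by (simp add: algebra_simps)
next
  case False
  then have "-a > 2" using assms by simp
  then show ?thesis
    using certificate_level_bound[OF certificate_reflect[OF cert]] assms False
    by (simp add: algebra_simps)
qed

lemma ereal_le_INF_enat:
  fixes S :: "nat set"
  assumes "\<And>e. e \<in> S \<Longrightarrow> r \<le> real e"
  shows "ereal r \<le> ereal_of_enat (INF e\<in>S. enat e)"
proof (cases "S = {}")
  case True
  then show ?thesis by (simp add: top_enat_def)
next
  case False
  define m where "m = (LEAST e. e \<in> S)"
  have "m \<in> S" using False unfolding m_def by (metis LeastI equals0I)
  have "(INF e\<in>S. enat e) = enat m"
    by (rule antisym[OF INF_lower[OF \<open>m \<in> S\<close>] INF_greatest]) (simp add: m_def Least_le)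
  then show ?thesis using assms[OF \<open>m \<in> S\<close>] by simp
qed

theorem proposition4p8:
  fixes a b :: real
  assumes "(a, b) \<in> P" and "\<bar>a\<bar> > 2"
  shows "ereal (2 + sqrt ((\<bar>a\<bar> - 2) / (2 * (1 + b - \<bar>a\<bar>)))) \<le> ereal_of_enat (N a b)"
proof -
  have h_pos: "\<And>x::real. \<bar>x\<bar> \<ge> 1 \<Longrightarrow> poly (hpoly a b) x > 0" using assms(1) by (simp add: P_def)
  have "1 - a + b > 0" "1 + a + b > 0"
    using h_pos[of "-1"] h_pos[of 1] by (simp_all add: hpoly_def)
  have "2 + sqrt ((\<bar>a\<bar> - 2) / (2 * (1 + b - \<bar>a\<bar>))) \<le> real e"
    if sos: "sos_le a b ([:1, 0, -1:], 0) e" for e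
  proof -
    obtain n vs W where "2 \<le> e" and "certificate a b (e - 2) n vs W"
      using sos_imp_certificate[OF sos] by blast
    then have "(\<bar>a\<bar> - 2) / (2 * (1 + b - \<bar>a\<bar>)) \<le> real (e - 2) ^ 2"
      using certificate_level_bound_abs assms(2) \<open>1 - a + b > 0\<close> \<open>1 + a + b > 0\<close> by blast
    then have "sqrt ((\<bar>a\<bar> - 2) / (2 * (1 + b - \<bar>a\<bar>))) \<le> real (e - 2)"
      using real_sqrt_le_mono by fastforce
    then show ?thesis using \<open>2 \<le> e\<close> by (simp add: of_nat_diff)
  qed
  then show ?thesis unfolding N_def theta_def by (rule ereal_le_INF_enat) simp
qed

end
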